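(* Consider the protocol $P_{RL}$ with parameter $N$ on a directed ring of size $n$ with $2\le n\le N$. The set $\mathcal{C}_{NI}$ of configurations (defined in the context) is closed: no configuration outside $\mathcal{C}_{NI}$ is reachable from a configuration in $\mathcal{C}_{NI}$.
   Context: Model. A population is a directed ring of $n\ge 2$ anonymous agents $u_0,\dots,u_{n-1}$ (indices modulo $n$) with arcs $e_i=(u_i,u_{i+1})$. A configuration $C$ assigns a state to each agent; $C\to C'$ means that $C'$ is obtained from $C$ by one interaction on some arc $e_i$, in which initiator $u_i$ and responder $u_{i+1}$ update their states by the transition function and all other agents keep their states. A configuration is reachable from $C$ if it is obtained from $C$ by finitely many such steps. Protocol $P_{RL}$ (parameter $N$). Each agent has variables $\mathit{leader}\in\{0,1\}$, $\mathit{bullet}\in\{0,1,2\}$, $\mathit{shield}\in\{0,1\}$, $\mathit{signal}\in\{0,1\}$, $\mathit{dist}\in\{0,\dots,N\}$. In an interaction with initiator $l$ and responder $r$ the following are executed in order: 1. If $l.\mathit{leader}=1$ then $l.\mathit{dist}\gets 0$. 2. If $r.\mathit{leader}=1$ then $r.\mathit{dist}\gets 0$; else if $r.\mathit{bullet}=0$ then $r.\mathit{dist}\gets\min(l.\mathit{dist}+1,N)$. 3. If $r.\mathit{dist}=N$ then $r.\mathit{leader}\gets1$, $r.\mathit{bullet}\gets2$, $r.\mathit{shield}\gets1$, $r.\mathit{signal}\gets0$, $r.\mathit{dist}\gets0$. 4. If $l.\mathit{leader}=1$ and $l.\mathit{signal}=1$ then $l.\mathit{bullet}\gets2$, $l.\mathit{shield}\gets1$,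 $l.\mathit{signal}\gets0$. 5. If $r.\mathit{leader}=1$ and $r.\mathit{signal}=1$ then $r.\mathit{bullet}\gets1$, $r.\mathit{shield}\gets0$, $r.\mathit{signal}\gets0$. 6. If $l.\mathit{bullet}>0$ and $r.\mathit{leader}=1$: set $r.\mathit{leader}\gets0$ if ($l.\mathit{bullet}=2$ and $r.\mathit{shield}=0$); then $l.\mathit{bullet}\gets0$. Else, if $l.\mathit{bullet}>0$ and $r.\mathit{leader}=0$: if $r.\mathit{bullet}=0$ then $r.\mathit{bullet}\gets l.\mathit{bullet}$; then $l.\mathit{bullet}\gets0$ and $r.\mathit{signal}\gets0$. 7. $l.\mathit{signal}\gets\max(l.\mathit{signal},r.\mathit{signal},r.\mathit{leader})$. An agent is a leader if $\mathit{leader}=1$ and a follower otherwise. Definitions (in a configuration with at least one leader). $\mathrm{dist}_L(i)=\min\{j\ge0: u_{i-j}.\mathit{leader}=1\}$ and $\mathrm{dist}_R(i)=\min\{j\ge0: u_{i+j}.\mathit{leader}=1\}$. $\mathrm{peaceful}(i)$ holds iff $u_{i-\mathrm{dist}_L(i)}.\mathit{shield}=1$ and $u_{i-j}.\mathit{signal}=0$ for all $0\le j\le\mathrm{dist}_L(i)$. $\mathrm{modest}(i)$ holds iff $\mathrm{peaceful}(i)$ holds and $u_{i-j}.\mathit{dist}\le\mathrm{dist}_L(i-j)$ for all $0\le j\le\mathrm{dist}_L(i)$. $\mathrm{secure}(i)$ holds iff $u_i.\mathit{dist}=0$ when $u_i.\mathit{leader}=1$, and $u_i.\mathit{dist}\le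 N-\mathrm{dist}_R(i)$ when $u_i.\mathit{leader}=0$. $\mathcal{C}_{PB}$ is the set of configurations with at least one leader in which every $u_j$ with $u_j.\mathit{bullet}=2$ satisfies $\mathrm{peaceful}(j)$. $\mathcal{C}_{NI}$ is the set of configurations in $\mathcal{C}_{PB}$ in which every agent $u_i$ satisfies $\mathrm{secure}(i)$ and every $u_j$ with $u_j.\mathit{bullet}=2$ satisfies $\mathrm{modest}(j)$. *)

theory Defs
  imports Main
begin

record agent =
  leader :: nat
  bullet :: nat
  shield :: nat
  signal :: nat
  dst    :: nat

type_synonym config = "nat \<Rightarrow> agent"

definition valid_state :: "nat \<Rightarrow> agent \<Rightarrow> bool" where
  "valid_state N s \<longleftrightarrow> leader s \<le> 1 \<and> bullet s \<le> 2 \<and> shield s \<le> 1 \<and> signal s \<le> 1 \<and> dst s \<le> N"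

definition valid_config :: "nat \<Rightarrow> nat \<Rightarrow> config \<Rightarrow> bool" where
  "valid_config N n C \<longleftrightarrow> (\<forall>i<n. valid_state N (C i))"

text \<open>Transition function: initiator l, responder r; steps 1-7 executed in order.\<close>
definition delta :: "nat \<Rightarrow> agent \<Rightarrow> agent \<Rightarrow> agent \<times> agent" where
  "delta N l r = (
     let l1 = (if leader l = 1 then l\<lparr>dst := 0\<rparr> else l);
         r2 = (if leader r = 1 then r\<lparr>dst := 0\<rparr>
               else if bullet r = 0 then r\<lparr>dst := min (dst l1 + 1) N\<rparr> else r);
         r3 = (if dst r2 = N then r2\<lparr>leader := 1, bullet := 2, shield := 1, signal := 0, dst := 0\<rparr> else r2);
         l4 = (if leader l1 = 1 \<and> signal l1 = 1 then l1\<lparr>bullet := 2, shield := 1, signal := 0\<rparr> else l1);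
         r5 = (if leader r3 = 1 \<and> signal r3 = 1 then r3\<lparr>bullet := 1, shield := 0, signal := 0\<rparr> else r3);
         (l6, r6) =
           (if bullet l4 > 0 \<and> leader r5 = 1 then
              (l4\<lparr>bullet := 0\<rparr>,
               if bullet l4 = 2 \<and> shield r5 = 0 then r5\<lparr>leader := 0\<rparr> else r5)
            else if bullet l4 > 0 \<and> leader r5 = 0 then
              (l4\<lparr>bullet := 0\<rparr>,
               (if bullet r5 = 0 then r5\<lparr>bullet := bullet l4\<rparr> else r5)\<lparr>signal := 0\<rparr>)
            else (l4, r5));
         l7 = l6\<lparr>signal := max (signal l6) (max (signal r6) (leader r6))\<rparr>
     in (l7, r6))"

definition interact :: "nat \<Rightarrow> nat \<Rightarrow> config \<Rightarrow> nat \<Rightarrow> config" where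
  "interact N n C i = (let j = (i + 1) mod n; (l', r') = delta N (C i) (C j)
                       in C(i := l', j := r'))"

definition step :: "nat \<Rightarrow> nat \<Rightarrow> config \<Rightarrow> config \<Rightarrow> bool" where
  "step N n C C' \<longleftrightarrow> (\<exists>i<n. C' = interact N n C i)"

definition reachable :: "nat \<Rightarrow> nat \<Rightarrow> config \<Rightarrow> config \<Rightarrow> bool" where
  "reachable N n C C' \<longleftrightarrow> (step N n)\<^sup>*\<^sup>* C C'"

definition at :: "config \<Rightarrow> nat \<Rightarrow> int \<Rightarrow> agent" where
  "at C n k = C (nat (k mod int n))"

definition has_leader :: "nat \<Rightarrow> config \<Rightarrow> bool" where
  "has_leader n C \<longleftrightarrow> (\<exists>i<n. leader (C i) = 1)"

definition distL :: "nat \<Rightarrow> config \<Rightarrow> int \<Rightarrow> nat" where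
  "distL n C i = (LEAST j. leader (at C n (i - int j)) = 1)"

definition distR :: "nat \<Rightarrow> config \<Rightarrow> int \<Rightarrow> nat" where
  "distR n C i = (LEAST j. leader (at C n (i + int j)) = 1)"

definition peaceful :: "nat \<Rightarrow> config \<Rightarrow> int \<Rightarrow> bool" where
  "peaceful n C i \<longleftrightarrow> shield (at C n (i - int (distL n C i))) = 1 \<and>
     (\<forall>j\<le>distL n C i. signal (at C n (i - int j)) = 0)"

definition modest :: "nat \<Rightarrow> config \<Rightarrow> int \<Rightarrow> bool" where
  "modest n C i \<longleftrightarrow> peaceful n C i \<and>
     (\<forall>j\<le>distL n C i. dst (at C n (i - int j)) \<le> distL n C (i - int j))"

definition secure :: "nat \<Rightarrow> nat \<Rightarrow> config \<Rightarrow> int \<Rightarrow> bool" where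
  "secure N n C i \<longleftrightarrow>
     (if leader (at C n i) = 1 then dst (at C n i) = 0
      else int (dst (at C n i)) \<le> int N - int (distR n C i))"

definition C_PB :: "nat \<Rightarrow> config set" where
  "C_PB n = {C. has_leader n C \<and> (\<forall>j<n. bullet (C j) = 2 \<longrightarrow> peaceful n C (int j))}"

definition C_NI :: "nat \<Rightarrow> nat \<Rightarrow> config set" where
  "C_NI N n = {C. C \<in> C_PB n \<and> (\<forall>i<n. secure N n C (int i)) \<and>
                  (\<forall>j<n. bullet (C j) = 2 \<longrightarrow> modest n C (int j))}"

end

theory Submission
  imports Defs
begin

text \<open>
  A configuration \<open>C\<close> is lifted to the \<open>n\<close>-periodic sequence \<^term>\<open>at C n\<close>
  on the integers, where the distances to the nearest leaders are plain least-number
  searches. Under the invariant the responder's \<open>dist\<close> stays below \<open>N\<close>, so no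
  interaction creates a leader. A leader is demoted only by a live bullet, fired either by a
  leader, whose shield is then up, or carried by a modest follower, whose leader is shielded
  and silent; in both cases the victim is another leader, so the initiator's left leader
  survives. The kill merges the victim's segment into the initiator's, and modesty of the
  killing bullet bounds the \<open>dist\<close> of the agents behind the victim by their distance to the
  surviving leader, which keeps them secure. Finally, the segment of a modest bullet cannot
  lose its leader, which is shielded and silent, and stays clean in any interaction; a bullet
  passed to the responder inherits the clean segment of its shooter.
\<close>

section \<open>Configurations as periodic sequences on the integers\<close>

definition periodic :: "nat \<Rightarrow> (int \<Rightarrow> agent) \<Rightarrow> bool" where
  "periodic n A \<longleftrightarrow> (\<forall>a. A a = A (a mod int n))"

definition distL_int :: "(int \<Rightarrow> agent) \<Rightarrow> int \<Rightarrow> nat" where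
  "distL_int A x = (LEAST j. leader (A (x - int j)) = 1)"

definition distR_int :: "(int \<Rightarrow> agent) \<Rightarrow> int \<Rightarrow> nat" where
  "distR_int A x = (LEAST j. leader (A (x + int j)) = 1)"

definition peaceful_int :: "(int \<Rightarrow> agent) \<Rightarrow> int \<Rightarrow> bool" where
  "peaceful_int A x \<longleftrightarrow> shield (A (x - int (distL_int A x))) = 1 \<and>
     (\<forall>j\<le>distL_int A x. signal (A (x - int j)) = 0)"

definition modest_int :: "(int \<Rightarrow> agent) \<Rightarrow> int \<Rightarrow> bool" where
  "modest_int A x \<longleftrightarrow> peaceful_int A x \<and>
     (\<forall>j\<le>distL_int A x. dst (A (x - int j)) \<le> distL_int A (x - int j))"

definition secure_int :: "nat \<Rightarrow> (int \<Rightarrow> agent) \<Rightarrow> int \<Rightarrow> bool" where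
  "secure_int N A x \<longleftrightarrow>
     (if leader (A x) = 1 then dst (A x) = 0 else dst (A x) + distR_int A x \<le> N)"

text \<open>The peacefulness clause of \<^const>\<open>C_PB\<close> is omitted: it follows from modesty.\<close>
definition NI_int :: "nat \<Rightarrow> (int \<Rightarrow> agent) \<Rightarrow> bool" where
  "NI_int N A \<longleftrightarrow> (\<exists>k. leader (A k) = 1) \<and> (\<forall>x. secure_int N A x) \<and>
     (\<forall>x. bullet (A x) = 2 \<longrightarrow> modest_int A x)"

lemma periodic_cong: "periodic n A \<Longrightarrow> a mod int n = b mod int n \<Longrightarrow> A a = A b"
  unfolding periodic_def by metis

lemma periodic_at: "0 < n \<Longrightarrow> periodic n (at C n)"
  unfolding periodic_def at_def by simp

lemma periodic_reach_left:
  assumes "periodic n A" and "0 < n"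
  shows "\<exists>j<n. A (x - int j) = A y"
proof -
  define j where "j = nat ((x - y) mod int n)"
  have j: "int j = (x - y) mod int n" and "j < n"
    using assms(2) by (auto simp: j_def nat_less_iff)
  moreover have "(x - int j) mod int n = y mod int n"
    using j by (simp add: mod_diff_right_eq)
  ultimately show ?thesis using periodic_cong[OF assms(1)] by blast
qed

lemma periodic_reach_right:
  assumes "periodic n A" and "0 < n"
  shows "\<exists>j<n. A (x + int j) = A y"
proof -
  define j where "j = nat ((y - x) mod int n)"
  have j: "int j = (y - x) mod int n" and "j < n"
    using assms(2) by (auto simp: j_def nat_less_iff)
  moreover have "(x + int j) mod int n = y mod int n"
    using j by (simp add: mod_add_right_eq)
  ultimately show ?thesis using periodic_cong[OF assms(1)] by blast
qed

lemma distL_int_eqI: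
  "leader (A (x - int k)) = 1 \<Longrightarrow> (\<And>j. j < k \<Longrightarrow> leader (A (x - int j)) \<noteq> 1) \<Longrightarrow>
    distL_int A x = k"
  unfolding distL_int_def by (rule Least_equality) (auto simp: not_less[symmetric])

lemma distR_int_eqI:
  "leader (A (x + int k)) = 1 \<Longrightarrow> (\<And>j. j < k \<Longrightarrow> leader (A (x + int j)) \<noteq> 1) \<Longrightarrow>
    distR_int A x = k"
  unfolding distR_int_def by (rule Least_equality) (auto simp: not_less[symmetric])

lemma distR_int_le: "leader (A (x + int k)) = 1 \<Longrightarrow> distR_int A x \<le> k"
  unfolding distR_int_def by (rule Least_le)

lemma distL_int_mod_cong:
  assumes "periodic n A" and "a mod int n = b mod int n"
  shows "distL_int A a = distL_int A b"
proof -
  have "A (a - j) = A (b - j)" for j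
    by (rule periodic_cong[OF assms(1)]) (metis assms(2) mod_diff_left_eq)
  then show ?thesis unfolding distL_int_def by simp
qed

lemma distR_int_mod_cong:
  assumes "periodic n A" and "a mod int n = b mod int n"
  shows "distR_int A a = distR_int A b"
proof -
  have "A (a + j) = A (b + j)" for j
    by (rule periodic_cong[OF assms(1)]) (metis assms(2) mod_add_left_eq)
  then show ?thesis unfolding distR_int_def by simp
qed

lemma modest_int_mod_cong:
  assumes "periodic n A" and "a mod int n = b mod int n"
  shows "modest_int A a = modest_int A b"
proof -
  have shift: "(a - j) mod int n = (b - j) mod int n" for j
    by (metis assms(2) mod_diff_left_eq)
  have "A (a - j) = A (b - j)" and "distL_int A (a - j) = distL_int A (b - j)" for j
    using periodic_cong[OF assms(1) shift] distL_int_mod_cong[OF assms(1) shift] by auto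
  moreover have "distL_int A a = distL_int A b"
    by (rule distL_int_mod_cong[OF assms])
  ultimately show ?thesis unfolding modest_int_def peaceful_int_def by simp
qed

lemma secure_int_mod_cong:
  "periodic n A \<Longrightarrow> a mod int n = b mod int n \<Longrightarrow> secure_int N A a = secure_int N A b"
  unfolding secure_int_def using periodic_cong distR_int_mod_cong by metis

locale leader_ring =
  fixes n :: nat and A :: "int \<Rightarrow> agent"
  assumes periodic: "periodic n A" and n_pos: "0 < n" and has_leader: "\<exists>k. leader (A k) = 1"
begin

lemma leader_left: "\<exists>j<n. leader (A (x - int j)) = 1"
  using has_leader periodic_reach_left[OF periodic n_pos] by metis

lemma leader_right: "\<exists>j<n. leader (A (x + int j)) = 1"
  using has_leader periodic_reach_right[OF periodic n_pos] by metis

lemma distL_int_leader: "leader (A (x - int (distL_int A x))) = 1"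
  using leader_left unfolding distL_int_def by (metis (mono_tags, lifting) LeastI)

lemma distL_int_less: "distL_int A x < n"
  using leader_left unfolding distL_int_def by (meson Least_le le_less_trans)

lemma distL_int_minimal: "j < distL_int A x \<Longrightarrow> leader (A (x - int j)) \<noteq> 1"
  unfolding distL_int_def by (rule not_less_Least)

lemma distR_int_leader: "leader (A (x + int (distR_int A x))) = 1"
  using leader_right unfolding distR_int_def by (metis (mono_tags, lifting) LeastI)

lemma distR_int_less: "distR_int A x < n"
  using leader_right unfolding distR_int_def by (meson Least_le le_less_trans)

lemma distR_int_minimal: "j < distR_int A x \<Longrightarrow> leader (A (x + int j)) \<noteq> 1"
  unfolding distR_int_def by (rule not_less_Least)

lemma distL_int_eq_0_iff: "distL_int A x = 0 \<longleftrightarrow> leader (A x) = 1"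
  using distL_int_leader[of x] by (auto intro: distL_int_eqI)

lemma distR_int_eq_0_iff: "distR_int A x = 0 \<longleftrightarrow> leader (A x) = 1"
  using distR_int_leader[of x] by (auto intro: distR_int_eqI)

lemma distL_int_diff: "m \<le> distL_int A x \<Longrightarrow> distL_int A (x - int m) = distL_int A x - m"
  by (rule distL_int_eqI)
    (use distL_int_leader[of x] distL_int_minimal[of "m + _" x] in \<open>auto simp: algebra_simps\<close>)

lemma distL_int_Suc: "leader (A x) \<noteq> 1 \<Longrightarrow> distL_int A x = Suc (distL_int A (x - 1))"
proof (rule distL_int_eqI)
  show "leader (A (x - int (Suc (distL_int A (x - 1))))) = 1"
    using distL_int_leader[of "x - 1"] by (simp add: algebra_simps)
  fix j assume "leader (A x) \<noteq> 1" "j < Suc (distL_int A (x - 1))"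
  then show "leader (A (x - int j)) \<noteq> 1"
    using distL_int_minimal[of "j - 1" "x - 1"] by (cases j) (auto simp: algebra_simps)
qed

lemma distR_int_Suc: "leader (A x) \<noteq> 1 \<Longrightarrow> distR_int A x = Suc (distR_int A (x + 1))"
proof (rule distR_int_eqI)
  show "leader (A (x + int (Suc (distR_int A (x + 1))))) = 1"
    using distR_int_leader[of "x + 1"] by (simp add: algebra_simps)
  fix j assume "leader (A x) \<noteq> 1" "j < Suc (distR_int A (x + 1))"
  then show "leader (A (x + int j)) \<noteq> 1"
    using distR_int_minimal[of "j - 1" "x + 1"] by (cases j) (auto simp: algebra_simps)
qed

lemma modest_int_iff:
  "modest_int A x \<longleftrightarrow> shield (A (x - int (distL_int A x))) = 1 \<and>
     (\<forall>j\<le>distL_int A x. signal (A (x - int j)) = 0 \<and> dst (A (x - int j)) \<le> distL_int A x - j)"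
  unfolding modest_int_def peaceful_int_def using distL_int_diff by auto

lemma modest_intD:
  assumes "modest_int A x" and "j \<le> distL_int A x"
  shows "signal (A (x - int j)) = 0" and "dst (A (x - int j)) \<le> distL_int A x - j"
  using assms unfolding modest_int_iff by auto

lemma modest_int_shield: "modest_int A x \<Longrightarrow> shield (A (x - int (distL_int A x))) = 1"
  unfolding modest_int_iff by blast

end

lemma all_residues_iff_all:
  assumes "0 < n" and "\<And>a b. a mod int n = b mod int n \<Longrightarrow> Q a = Q b"
  shows "(\<forall>i<n. Q (int i)) \<longleftrightarrow> (\<forall>x. Q x)"
proof safe
  fix x assume "\<forall>i<n. Q (int i)"
  moreover have "nat (x mod int n) < n" and "int (nat (x mod int n)) mod int n = x mod int n"
    using assms(1) by (auto simp: nat_less_iff)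
  ultimately show "Q x" using assms(2) by metis
qed simp

lemma C_NI_iff_NI_int:
  assumes n: "0 < n"
  shows "C \<in> C_NI N n \<longleftrightarrow> NI_int N (at C n)"
proof -
  let ?A = "at C n"
  have per: "periodic n ?A" by (rule periodic_at[OF n])
  have "distL n C = distL_int ?A" "distR n C = distR_int ?A"
    unfolding distL_def distL_int_def distR_def distR_int_def by auto
  then have modest: "modest n C x = modest_int ?A x"
    and secure: "secure N n C x = secure_int N ?A x" for x
    unfolding modest_def modest_int_def peaceful_def peaceful_int_def secure_def secure_int_def
    by auto
  have at_less: "?A (int j) = C j" if "j < n" for j
    using that unfolding at_def by simp
  have "has_leader n C \<longleftrightarrow> (\<exists>k. leader (?A k) = 1)"
  proof
    assume "\<exists>k. leader (?A k) = 1"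
    then obtain k where "leader (?A k) = 1" by blast
    moreover have "nat (k mod int n) < n" using n by (simp add: nat_less_iff)
    ultimately show "has_leader n C" unfolding has_leader_def at_def by blast
  qed (use at_less in \<open>(auto simp: has_leader_def; metis)\<close>)
  moreover have "(\<forall>i<n. secure N n C (int i)) \<longleftrightarrow> (\<forall>x. secure_int N ?A x)"
    unfolding secure by (rule all_residues_iff_all[OF n secure_int_mod_cong[OF per]])
  moreover have "(\<forall>j<n. bullet (C j) = 2 \<longrightarrow> modest n C (int j)) \<longleftrightarrow>
      (\<forall>x. bullet (?A x) = 2 \<longrightarrow> modest_int ?A x)"
  proof -
    have "(\<forall>j<n. bullet (C j) = 2 \<longrightarrow> modest n C (int j)) \<longleftrightarrow>
        (\<forall>j<n. bullet (?A (int j)) = 2 \<longrightarrow> modest_int ?A (int j))"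
      using at_less modest by auto
    also have "\<dots> \<longleftrightarrow> (\<forall>x. bullet (?A x) = 2 \<longrightarrow> modest_int ?A x)"
      by (rule all_residues_iff_all[OF n]) (metis periodic_cong[OF per] modest_int_mod_cong[OF per])
    finally show ?thesis .
  qed
  moreover have "modest n C x \<Longrightarrow> peaceful n C x" for x
    unfolding modest_def by simp
  ultimately show ?thesis
    unfolding C_NI_def C_PB_def NI_int_def by auto
qed

section \<open>The transition function\<close>

definition dist_step1 :: "agent \<Rightarrow> nat" where
  "dist_step1 a = (if leader a = 1 then 0 else dst a)"

definition bullet_step4 :: "agent \<Rightarrow> nat" where
  "bullet_step4 a = (if leader a = 1 \<and> signal a = 1 then 2 else bullet a)"

definition signal_step4 :: "agent \<Rightarrow> nat" where
  "signal_step4 a = (if leader a = 1 \<and> signal a = 1 then 0 else signal a)"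

definition shield_step5 :: "agent \<Rightarrow> nat" where
  "shield_step5 a = (if leader a = 1 \<and> signal a = 1 then 0 else shield a)"

locale interaction =
  fixes N :: nat and l r :: agent
begin

definition "l1 = (if leader l = 1 then l\<lparr>dst := 0\<rparr> else l)"
definition "r2 = (if leader r = 1 then r\<lparr>dst := 0\<rparr>
               else if bullet r = 0 then r\<lparr>dst := min (dst l1 + 1) N\<rparr> else r)"
definition "r3 = (if dst r2 = N then r2\<lparr>leader := 1, bullet := 2, shield := 1, signal := 0, dst := 0\<rparr>
               else r2)"
definition "l4 = (if leader l1 = 1 \<and> signal l1 = 1 then l1\<lparr>bullet := 2, shield := 1, signal := 0\<rparr>
               else l1)"
definition "r5 = (if leader r3 = 1 \<and> signal r3 = 1 then r3\<lparr>bullet := 1, shield := 0, signal := 0\<rparr>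
               else r3)"
definition "p6 = (if bullet l4 > 0 \<and> leader r5 = 1 then
              (l4\<lparr>bullet := 0\<rparr>,
               if bullet l4 = 2 \<and> shield r5 = 0 then r5\<lparr>leader := 0\<rparr> else r5)
            else if bullet l4 > 0 \<and> leader r5 = 0 then
              (l4\<lparr>bullet := 0\<rparr>,
               (if bullet r5 = 0 then r5\<lparr>bullet := bullet l4\<rparr> else r5)\<lparr>signal := 0\<rparr>)
            else (l4, r5))"
definition "l7 = (fst p6)\<lparr>signal := max (signal (fst p6)) (max (signal (snd p6)) (leader (snd p6)))\<rparr>"

lemma delta_eq: "delta N l r = (l7, snd p6)"
  unfolding delta_def Let_def l1_def[symmetric] r2_def[symmetric] r3_def[symmetric]
    l4_def[symmetric] r5_def[symmetric] p6_def[symmetric] l7_def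
  by (simp only: split_beta)

lemma valid_state_delta:
  assumes "valid_state N l" and "valid_state N r"
  shows "valid_state N (fst (delta N l r))" and "valid_state N (snd (delta N l r))"
proof -
  have "valid_state N l1" "valid_state N r2"
    using assms unfolding l1_def r2_def valid_state_def by auto
  then have "valid_state N l4" "valid_state N r3"
    unfolding l4_def r3_def valid_state_def by auto
  then have "valid_state N (fst p6)" "valid_state N (snd p6)"
    unfolding p6_def r5_def valid_state_def by auto
  then show "valid_state N (fst (delta N l r))" "valid_state N (snd (delta N l r))"
    unfolding delta_eq l7_def valid_state_def by auto
qed

end

text \<open>The last two hypotheses keep the responder's \<open>dist\<close> below \<open>N\<close>, so that step 3 never
  creates a leader.\<close>
locale spawn_free_interaction = interaction +
  assumes valid_l: "valid_state N l" and valid_r: "valid_state N r" and N_pos: "0 < N"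
    and fresh_dist_below: "leader r \<noteq> 1 \<Longrightarrow> bullet r = 0 \<Longrightarrow> dist_step1 l + 1 < N"
    and kept_dist_below: "leader r \<noteq> 1 \<Longrightarrow> bullet r \<noteq> 0 \<Longrightarrow> dst r < N"
begin

lemma no_spawn: "r3 = r2"
  using valid_l valid_r N_pos fresh_dist_below kept_dist_below
  unfolding r3_def r2_def l1_def dist_step1_def valid_state_def by auto

lemma leader_r_cases: "leader r = 0 \<or> leader r = 1"
  using valid_r unfolding valid_state_def by auto

lemma l1_fields: "leader l1 = leader l" "signal l1 = signal l" "bullet l1 = bullet l"
  "shield l1 = shield l" "dst l1 = dist_step1 l"
  unfolding l1_def dist_step1_def by auto

lemma r2_fields: "leader r2 = leader r" "signal r2 = signal r" "bullet r2 = bullet r"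
  "shield r2 = shield r"
  "dst r2 = (if leader r = 1 then 0 else if bullet r = 0 then min (dist_step1 l + 1) N else dst r)"
  unfolding r2_def by (auto simp: l1_fields)

lemma l4_fields: "leader l4 = leader l" "signal l4 = signal_step4 l" "bullet l4 = bullet_step4 l"
  "dst l4 = dist_step1 l" "shield l4 = (if leader l = 1 \<and> signal l = 1 then 1 else shield l)"
  unfolding l4_def signal_step4_def bullet_step4_def by (auto simp: l1_fields)

lemma r5_fields: "leader r5 = leader r" "shield r5 = shield_step5 r" "dst r5 = dst r2"
  "signal r5 = (if leader r = 1 then 0 else signal r)"
  "bullet r5 = (if leader r = 1 \<and> signal r = 1 then 1 else bullet r)"
  using valid_r unfolding r5_def shield_step5_def no_spawn valid_state_def by (auto simp: r2_fields)

definition kills :: bool where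
  "kills \<longleftrightarrow> leader r = 1 \<and> bullet_step4 l = 2 \<and> shield_step5 r = 0"

lemma initiator_fields:
  "leader (fst (delta N l r)) = leader l"
  "bullet (fst (delta N l r)) = 0"
  "dst (fst (delta N l r)) = dist_step1 l"
  "shield (fst (delta N l r)) = (if leader l = 1 \<and> signal l = 1 then 1 else shield l)"
  "signal (fst (delta N l r)) =
     max (signal_step4 l) (max (signal (snd (delta N l r))) (leader (snd (delta N l r))))"
  using leader_r_cases unfolding delta_eq l7_def p6_def by (auto simp: l4_fields r5_fields)

lemma responder_fields:
  "leader (snd (delta N l r)) = (if kills then 0 else leader r)"
  "dst (snd (delta N l r)) =
     (if leader r = 1 then 0 else if bullet r = 0 then min (dist_step1 l + 1) N else dst r)"
  "shield (snd (delta N l r)) = shield_step5 r"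
  "signal (snd (delta N l r)) =
     (if leader r = 1 then 0 else if bullet_step4 l > 0 then 0 else signal r)"
  "bullet (snd (delta N l r)) =
     (if leader r = 1 then (if signal r = 1 then 1 else bullet r)
      else if bullet_step4 l > 0 \<and> bullet r = 0 then bullet_step4 l else bullet r)"
  using leader_r_cases unfolding delta_eq p6_def kills_def
  by (auto simp: l4_fields r5_fields r2_fields)

lemma initiator_quiet:
  assumes "signal l = 0" and "leader r \<noteq> 1" and "signal r = 0"
  shows "signal (fst (delta N l r)) = 0" and "dst (fst (delta N l r)) \<le> dst l"
    and "shield (fst (delta N l r)) = shield l"
  using assms leader_r_cases initiator_fields responder_fields(1,4)
  unfolding kills_def signal_step4_def dist_step1_def by auto

lemma responder_quiet:
  assumes "signal r = 0"
  shows "signal (snd (delta N l r)) = 0"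
    and "dst (snd (delta N l r)) \<le> (if leader r = 1 then 0 else max (dist_step1 l + 1) (dst r))"
    and "leader r = 1 \<Longrightarrow> shield (snd (delta N l r)) = shield r"
  using assms responder_fields(2,3,4) unfolding shield_step5_def by auto

end

section \<open>One interaction preserves the invariant\<close>

locale interaction_step =
  fixes N n :: nat and A A' :: "int \<Rightarrow> agent" and i :: int
  assumes n_ge_2: "2 \<le> n" and n_le_N: "n \<le> N" and periodic_A: "periodic n A"
    and valid: "\<And>k. valid_state N (A k)" and invariant: "NI_int N A"
    and A'_eq: "\<And>k. A' k = (if k mod int n = i mod int n then fst (delta N (A i) (A (i + 1)))
       else if (k - 1) mod int n = i mod int n then snd (delta N (A i) (A (i + 1))) else A k)"
begin

abbreviation "init' \<equiv> fst (delta N (A i) (A (i + 1)))"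
abbreviation "resp' \<equiv> snd (delta N (A i) (A (i + 1)))"

text \<open>The copies of the initiator; those of the responder are the \<open>k\<close> with
  \<open>is_init (k - 1)\<close>.\<close>
definition is_init :: "int \<Rightarrow> bool" where
  "is_init k \<longleftrightarrow> k mod int n = i mod int n"

lemma secure_A: "secure_int N A x"
  using invariant unfolding NI_int_def by blast

lemma modest_A: "bullet (A x) = 2 \<Longrightarrow> modest_int A x"
  using invariant unfolding NI_int_def by blast

lemma leader_A_cases: "leader (A k) = 0 \<or> leader (A k) = 1"
  using valid[of k] unfolding valid_state_def by auto

lemma signal_A_le: "signal (A k) \<le> 1"
  using valid[of k] unfolding valid_state_def by auto

sublocale R: leader_ring n A
  using periodic_A invariant n_ge_2 unfolding NI_int_def by unfold_locales auto

lemma is_init_i: "is_init i"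
  unfolding is_init_def ..

lemma is_init_unique:
  assumes "is_init a" and "is_init b" and "a - b < int n" and "b - a < int n"
  shows "a = b"
proof (rule ccontr)
  assume "a \<noteq> b"
  moreover have "int n dvd a - b"
    using assms(1,2) unfolding is_init_def by (metis mod_eq_dvd_iff)
  ultimately have "int n \<le> \<bar>a - b\<bar>"
    using dvd_imp_le_int[of "a - b" "int n"] by simp
  then show False using assms(3,4) by linarith
qed

lemma not_init_and_resp: "is_init k \<Longrightarrow> is_init (k - 1) \<Longrightarrow> False"
  using is_init_unique[of k "k - 1"] n_ge_2 by auto

lemma init_offset_mod:
  assumes "is_init a" and "(b - a) mod int n = (c - i) mod int n"
  shows "b mod int n = c mod int n"
proof -
  have "(a + (b - a)) mod int n = (i + (c - i)) mod int n"
    using assms unfolding is_init_def by (metis mod_add_eq)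
  then show ?thesis by simp
qed

lemma periodic_A': "periodic n A'"
  unfolding periodic_def
proof
  fix a
  have "(a mod int n - 1) mod int n = (a - 1) mod int n"
    by (simp add: mod_diff_left_eq)
  moreover have "A a = A (a mod int n)"
    using periodic_A unfolding periodic_def by blast
  ultimately show "A' a = A' (a mod int n)"
    unfolding A'_eq by simp
qed

lemma A_init_offset: "is_init a \<Longrightarrow> (b - a) mod int n = (c - i) mod int n \<Longrightarrow> A b = A c"
  using init_offset_mod periodic_cong[OF periodic_A] by blast

lemma A'_init_offset: "is_init a \<Longrightarrow> (b - a) mod int n = (c - i) mod int n \<Longrightarrow> A' b = A' c"
  using init_offset_mod periodic_cong[OF periodic_A'] by blast

lemma A_init: "is_init k \<Longrightarrow> A k = A i"
  using A_init_offset[of k k i] by simp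

lemma A_resp: "is_init (k - 1) \<Longrightarrow> A k = A (i + 1)"
  using A_init_offset[of "k - 1" k "i + 1"] by simp

sublocale D: spawn_free_interaction N "A i" "A (i + 1)"
proof
  show "valid_state N (A i)" "valid_state N (A (i + 1))" by (rule valid)+
  show "0 < N" using n_ge_2 n_le_N by simp
  show "dist_step1 (A i) + 1 < N" if "leader (A (i + 1)) \<noteq> 1"
  proof (cases "leader (A i) = 1")
    case True then show ?thesis using n_ge_2 n_le_N by (simp add: dist_step1_def)
  next
    case False
    have "dst (A i) + distR_int A i \<le> N"
      using secure_A[of i] False unfolding secure_int_def by simp
    then show ?thesis
      using False that R.distR_int_Suc[OF False] R.distR_int_eq_0_iff[of "i + 1"]
      by (simp add: dist_step1_def)
  qed
  show "dst (A (i + 1)) < N" if "leader (A (i + 1)) \<noteq> 1"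
    using secure_A[of "i + 1"] R.distR_int_eq_0_iff[of "i + 1"] that
    unfolding secure_int_def by simp
qed

lemma A'_init: "is_init k \<Longrightarrow> A' k = init'"
  unfolding A'_eq is_init_def[symmetric] by simp

lemma A'_resp: "is_init (k - 1) \<Longrightarrow> A' k = resp'"
  using not_init_and_resp[of k] unfolding A'_eq is_init_def[symmetric] by auto

lemma A'_other: "\<not> is_init k \<Longrightarrow> \<not> is_init (k - 1) \<Longrightarrow> A' k = A k"
  unfolding A'_eq is_init_def[symmetric] by simp

lemma kills_leader_resp: "D.kills \<Longrightarrow> leader (A (i + 1)) = 1"
  unfolding D.kills_def by simp

lemma leader_A'_iff: "leader (A' k) = 1 \<longleftrightarrow> leader (A k) = 1 \<and> \<not> (is_init (k - 1) \<and> D.kills)"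
proof -
  consider "is_init k" | "is_init (k - 1)" | "\<not> is_init k" "\<not> is_init (k - 1)" by blast
  then show ?thesis
  proof cases
    case 1 then show ?thesis using A'_init A_init not_init_and_resp D.initiator_fields by auto
  next
    case 2 then show ?thesis using A'_resp A_resp D.responder_fields(1) kills_leader_resp by auto
  qed (simp add: A'_other)
qed

lemma leader_A'_imp: "leader (A' k) = 1 \<Longrightarrow> leader (A k) = 1"
  using leader_A'_iff by blast

lemma distL_int_A'_no_kill: "\<not> D.kills \<Longrightarrow> distL_int A' x = distL_int A x"
  unfolding distL_int_def using leader_A'_iff by simp

lemma distR_int_A'_no_kill: "\<not> D.kills \<Longrightarrow> distR_int A' x = distR_int A x"
  unfolding distR_int_def using leader_A'_iff by simp

lemma kills_cases:
  "D.kills \<Longrightarrow> leader (A i) = 1 \<or> (leader (A i) \<noteq> 1 \<and> bullet (A i) = 2 \<and> modest_int A i)"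
  using modest_A[of i] unfolding D.kills_def bullet_step4_def by (auto split: if_splits)

text \<open>The shield of the bullet's own leader protects it, so the victim is another leader.\<close>
lemma kills_other_leader:
  assumes kills: "D.kills"
  shows "\<not> is_init (i - int (distL_int A i) - 1)"
proof
  assume init: "is_init (i - int (distL_int A i) - 1)"
  have victim: "A (i - int (distL_int A i)) = A (i + 1)"
    using A_resp[OF init[simplified]] by simp
  show False using kills_cases[OF kills]
  proof
    assume "leader (A i) = 1"
    then have "distL_int A i = 0" using R.distL_int_eq_0_iff by simp
    then show False using init not_init_and_resp[of i] is_init_i by simp
  next
    assume "leader (A i) \<noteq> 1 \<and> bullet (A i) = 2 \<and> modest_int A i"
    then have "shield (A (i + 1)) = 1" "signal (A (i + 1)) = 0"
      using R.modest_int_shield[of i] R.modest_intD(1)[of i "distL_int A i"] victim by auto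
    then show False using kills unfolding D.kills_def shield_step5_def by auto
  qed
qed

lemma left_leader_survives_kill: "D.kills \<Longrightarrow> leader (A' (i - int (distL_int A i))) = 1"
  using leader_A'_iff R.distL_int_leader kills_other_leader by (simp add: algebra_simps)

lemma has_leader_A': "\<exists>k. leader (A' k) = 1"
  using left_leader_survives_kill R.has_leader leader_A'_iff by blast

sublocale R': leader_ring n A'
  using periodic_A' has_leader_A' n_ge_2 by unfold_locales auto

lemma distL_int_A'_spared:
  assumes "\<not> is_init (x - int (distL_int A x) - 1)"
  shows "distL_int A' x = distL_int A x"
proof (rule distL_int_eqI)
  show "leader (A' (x - int (distL_int A x))) = 1"
    using leader_A'_iff R.distL_int_leader[of x] assms by simp
  fix j assume "j < distL_int A x"
  then show "leader (A' (x - int j)) \<noteq> 1" using leader_A'_imp R.distL_int_minimal by blast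
qed

lemma distR_int_A'_spared:
  assumes "\<not> is_init (x + int (distR_int A x) - 1)"
  shows "distR_int A' x = distR_int A x"
proof (rule distR_int_eqI)
  show "leader (A' (x + int (distR_int A x))) = 1"
    using leader_A'_iff R.distR_int_leader[of x] assms by simp
  fix j assume "j < distR_int A x"
  then show "leader (A' (x + int j)) \<noteq> 1" using leader_A'_imp R.distR_int_minimal by blast
qed

lemma secure_A'_init:
  assumes init: "is_init x"
  shows "secure_int N A' x"
proof -
  have agents: "A' x = init'" "A x = A i" using A'_init A_init init by auto
  show ?thesis
  proof (cases "leader (A i) = 1")
    case True then show ?thesis using agents D.initiator_fields unfolding secure_int_def dist_step1_def by simp
  next
    case False
    show ?thesis
    proof (cases D.kills)
      case kills: True
      then have "modest_int A i" using kills_cases False by auto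
      then have dst: "dst (A i) \<le> distL_int A i" using R.modest_intD(2)[of i 0] by simp
      have "A' (x + int (n - distL_int A i)) = A' (i - int (distL_int A i))"
        by (rule A'_init_offset[OF init]) (use R.distL_int_less[of i] in simp)
      then have "distR_int A' x \<le> n - distL_int A i"
        using left_leader_survives_kill[OF kills] distR_int_le[of A' x] by simp
      then show ?thesis
        using agents D.initiator_fields False dst n_le_N R.distL_int_less[of i]
        unfolding secure_int_def dist_step1_def by simp
    next
      case False
      then show ?thesis
        using secure_A[of x] agents D.initiator_fields \<open>leader (A i) \<noteq> 1\<close> distR_int_A'_no_kill
        unfolding secure_int_def dist_step1_def by simp
    qed
  qed
qed

lemma secure_A'_resp:
  assumes resp: "is_init (x - 1)"
  shows "secure_int N A' x"
proof -
  have agents: "A' x = resp'" "A x = A (i + 1)" using A'_resp A_resp resp by auto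
  show ?thesis
  proof (cases "leader (A (i + 1)) = 1")
    case True
    then show ?thesis using agents D.responder_fields(2) R'.distR_int_less[of x] n_le_N
      unfolding secure_int_def by simp
  next
    case False
    then have no_kill: "\<not> D.kills" using kills_leader_resp by blast
    have "distR_int A x = distR_int A (i + 1)"
      by (rule distR_int_mod_cong[OF periodic_A init_offset_mod[OF resp]]) simp
    then have dist: "distR_int A' x = distR_int A (i + 1)"
      using distR_int_A'_no_kill[OF no_kill] by simp
    have follower: "leader resp' \<noteq> 1" using D.responder_fields(1) no_kill False by simp
    show ?thesis
    proof (cases "bullet (A (i + 1)) = 0")
      case True
      have "dist_step1 (A i) + 1 + distR_int A (i + 1) \<le> N"
      proof (cases "leader (A i) = 1")
        case True
        then show ?thesis using R.distR_int_less[of "i + 1"] n_le_N by (simp add: dist_step1_def)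
      next
        case False
        then show ?thesis using secure_A[of i] R.distR_int_Suc[OF False]
          unfolding secure_int_def dist_step1_def by simp
      qed
      then show ?thesis
        using agents follower dist D.responder_fields(2) \<open>leader (A (i + 1)) \<noteq> 1\<close> True
        unfolding secure_int_def by simp
    next
      case False
      then show ?thesis
        using agents follower dist D.responder_fields(2) \<open>leader (A (i + 1)) \<noteq> 1\<close> secure_A[of x]
          \<open>distR_int A x = distR_int A (i + 1)\<close>
        unfolding secure_int_def by simp
    qed
  qed
qed

text \<open>The killed responder was the right leader of \<open>x\<close>; the dist of \<open>x\<close> is bounded by its
  distance to the left leader of the initiator because the killing bullet was modest.\<close>
lemma secure_bound_kill_merged:
  assumes kills: "D.kills" and follower: "leader (A x) \<noteq> 1"
    and init: "is_init (x + int (distR_int A x) - 1)"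
  shows "dst (A x) + distR_int A' x \<le> n"
proof -
  define m where "m = distR_int A x - 1"
  have pos: "distR_int A x \<ge> 1" using follower R.distR_int_eq_0_iff[of x] by simp
  then have init_m: "is_init (x + int m)"
    using init unfolding m_def by (simp add: algebra_simps)
  have "leader (A (i - int j)) \<noteq> 1" if "j \<le> m" for j
  proof -
    have "A (x + int (m - j)) = A (i - int j)" by (rule A_init_offset[OF init_m]) (use that in simp)
    moreover have "m - j < distR_int A x" using that pos unfolding m_def by simp
    ultimately show ?thesis using R.distR_int_minimal by metis
  qed
  then have m_less: "m < distL_int A i"
    using R.distL_int_leader[of i] by (meson not_less)
  then have "leader (A i) \<noteq> 1" using R.distL_int_eq_0_iff[symmetric] by auto
  then have "modest_int A i" using kills_cases[OF kills] by auto
  moreover have "A x = A (i - int m)" by (rule A_init_offset[OF init_m]) simp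
  ultimately have "dst (A x) \<le> distL_int A i - m" using R.modest_intD(2) m_less by simp
  moreover have "A' (x + int (n - (distL_int A i - m))) = A' (i - int (distL_int A i))"
    by (rule A'_init_offset[OF init_m]) (use R.distL_int_less[of i] m_less in simp)
  then have "distR_int A' x \<le> n - (distL_int A i - m)"
    using left_leader_survives_kill[OF kills] distR_int_le[of A' x] by simp
  ultimately show ?thesis using R.distL_int_less[of i] by linarith
qed

lemma secure_A'_other:
  assumes other: "\<not> is_init x" "\<not> is_init (x - 1)"
  shows "secure_int N A' x"
proof -
  have agent: "A' x = A x" using A'_other other by simp
  show ?thesis
  proof (cases "leader (A x) = 1 \<or> \<not> D.kills")
    case True
    then show ?thesis
      using agent secure_A[of x] distR_int_A'_no_kill unfolding secure_int_def by auto
  next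
    case False
    then have kills: "D.kills" and follower: "leader (A x) \<noteq> 1" by auto
    show ?thesis
    proof (cases "is_init (x + int (distR_int A x) - 1)")
      case True
      then show ?thesis
        using secure_bound_kill_merged[OF kills follower] agent follower n_le_N
        unfolding secure_int_def by simp
    next
      case False
      then have "distR_int A' x = distR_int A x" by (rule distR_int_A'_spared)
      then show ?thesis using agent secure_A[of x] unfolding secure_int_def by simp
    qed
  qed
qed

lemma secure_A': "secure_int N A' x"
  using secure_A'_init secure_A'_resp secure_A'_other by blast

lemma A'_left_of_resp:
  assumes resp: "is_init (x - 1)" and j: "2 \<le> j" "j < n"
  shows "A' (x - int j) = A (x - int j)"
proof (rule A'_other)
  show "\<not> is_init (x - int j)" and "\<not> is_init (x - int j - 1)"
    using is_init_unique[OF _ resp, of "x - int j"] is_init_unique[OF _ resp, of "x - int j - 1"] j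
    by auto
qed

lemma resp_follower_distL_int_A':
  assumes resp: "is_init (x - 1)" and follower: "leader (A (i + 1)) \<noteq> 1"
  shows "distL_int A' x = Suc (distL_int A (x - 1))"
  using distL_int_A'_no_kill kills_leader_resp follower R.distL_int_Suc A_resp[OF resp] by metis

lemma modest_A'_resp_bullet_from_leader:
  assumes resp: "is_init (x - 1)" and follower: "leader (A (i + 1)) \<noteq> 1"
    and bullet: "bullet (A (i + 1)) = 0" "bullet_step4 (A i) = 2" and leader: "leader (A i) = 1"
  shows "modest_int A' x"
proof -
  have agents: "A' x = resp'" "A' (x - int 1) = init'" "A (x - 1) = A i"
    using A'_resp A'_init A_init resp by auto
  have "distL_int A (x - 1) = 0" using R.distL_int_eq_0_iff agents leader by simp
  then have dist: "distL_int A' x = 1" using resp_follower_distL_int_A'[OF resp follower] by simp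
  have "shield init' = 1"
  proof (cases "signal (A i) = 1")
    case True then show ?thesis using D.initiator_fields leader by simp
  next
    case False
    then have "modest_int A (x - 1)" using bullet modest_A agents unfolding bullet_step4_def by simp
    then show ?thesis using R.modest_int_shield[of "x - 1"] \<open>distL_int A (x - 1) = 0\<close> agents
        D.initiator_fields False by simp
  qed
  moreover have resp': "signal resp' = 0" "leader resp' = 0" "dst resp' \<le> 1"
    using D.responder_fields(1,2,4) kills_leader_resp follower bullet leader leader_A_cases[of "i + 1"]
    by (auto simp: dist_step1_def)
  then have "signal init' = 0" "dst init' = 0"
    using D.initiator_fields leader signal_A_le[of i] by (auto simp: signal_step4_def dist_step1_def)
  then have "signal (A' (x - int j)) = 0 \<and> dst (A' (x - int j)) \<le> 1 - j" if "j \<le> 1" for j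
    using that agents resp' by (cases j) auto
  ultimately show ?thesis unfolding R'.modest_int_iff dist using agents by simp
qed

lemma modest_A'_resp_bullet_from_follower:
  assumes resp: "is_init (x - 1)" and follower: "leader (A (i + 1)) \<noteq> 1"
    and bullet: "bullet (A (i + 1)) = 0" "bullet_step4 (A i) = 2" and follower_i: "leader (A i) \<noteq> 1"
  shows "modest_int A' x"
proof -
  define k where "k = distL_int A (x - 1)"
  have agents: "A' x = resp'" "A' (x - int 1) = init'" "A (x - 1) = A i"
    using A'_resp A'_init A_init resp by auto
  have dist: "distL_int A' x = k + 1"
    using resp_follower_distL_int_A'[OF resp follower] unfolding k_def by simp
  have modest: "modest_int A (x - 1)"
    using bullet follower_i modest_A agents unfolding bullet_step4_def by simp
  have "k \<ge> 1" using R.distL_int_eq_0_iff[of "x - 1"] follower_i agents unfolding k_def by simp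
  have i_clean: "signal (A i) = 0" "dst (A i) \<le> k"
    using R.modest_intD[OF modest, of 0] agents unfolding k_def by auto
  have resp': "signal resp' = 0" "leader resp' = 0" "dst resp' \<le> k + 1"
    using D.responder_fields(1,2,4) kills_leader_resp follower bullet follower_i i_clean
      leader_A_cases[of "i + 1"] by (auto simp: dist_step1_def)
  then have init': "signal init' = 0" "dst init' \<le> k"
    using D.initiator_fields follower_i i_clean by (auto simp: signal_step4_def dist_step1_def)
  have far: "A' (x - int j) = A (x - 1 - int (j - 1))" if "2 \<le> j" "j \<le> k + 1" for j
    using A'_left_of_resp[OF resp, of j] R'.distL_int_less[of x] dist that
    by (simp add: algebra_simps)
  have "shield (A' (x - int (k + 1))) = 1"
    using far[of "k + 1"] \<open>k \<ge> 1\<close> R.modest_int_shield[OF modest] unfolding k_def by simp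
  moreover have "signal (A' (x - int j)) = 0 \<and> dst (A' (x - int j)) \<le> k + 1 - j"
    if j: "j \<le> k + 1" for j
  proof -
    consider "j = 0" | "j = 1" | "2 \<le> j" by linarith
    then show ?thesis
    proof cases
      case 3
      then have "j - 1 \<le> k" using j by simp
      then show ?thesis
        using far[OF 3 j] R.modest_intD[OF modest] 3 unfolding k_def by fastforce
    qed (use agents resp' init' in auto)
  qed
  ultimately show ?thesis unfolding R'.modest_int_iff dist by simp
qed

lemma modest_segment_A'_at_init:
  assumes init: "is_init (x - int j)" and not_init: "\<not> is_init x"
    and modest: "modest_int A x" and j: "j \<le> distL_int A x"
  shows "signal (A' (x - int j)) = 0 \<and> dst (A' (x - int j)) \<le> distL_int A x - j \<and>
    (j = distL_int A x \<longrightarrow> shield (A' (x - int j)) = 1)"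
proof -
  have "j \<ge> 1" using init not_init by (cases j) auto
  then have resp: "A (x - int (j - 1)) = A (i + 1)" using A_resp[of "x - int (j - 1)"] init by simp
  then have "leader (A (i + 1)) \<noteq> 1"
    using R.distL_int_minimal[of "j - 1" x] j \<open>j \<ge> 1\<close> by simp
  moreover have "signal (A (i + 1)) = 0"
    using R.modest_intD(1)[OF modest, of "j - 1"] resp j by simp
  moreover have "signal (A i) = 0" "dst (A i) \<le> distL_int A x - j"
    "j = distL_int A x \<Longrightarrow> shield (A i) = 1"
    using R.modest_intD[OF modest j] R.modest_int_shield[OF modest] A_init[OF init] by auto
  ultimately show ?thesis using D.initiator_quiet A'_init[OF init] by auto
qed

lemma modest_segment_A'_at_resp:
  assumes resp: "is_init (x - int j - 1)" and modest: "modest_int A x" and j: "j \<le> distL_int A x"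
  shows "signal (A' (x - int j)) = 0 \<and> dst (A' (x - int j)) \<le> distL_int A x - j \<and>
    (j = distL_int A x \<longrightarrow> shield (A' (x - int j)) = 1)"
proof -
  have agents: "A' (x - int j) = resp'" "A (x - int j) = A (i + 1)"
    using A'_resp A_resp resp by auto
  have clean: "signal (A (i + 1)) = 0" "dst (A (i + 1)) \<le> distL_int A x - j"
    using R.modest_intD[OF modest j] agents by auto
  show ?thesis
  proof (cases "j = distL_int A x")
    case True
    then have "leader (A (i + 1)) = 1" "shield (A (i + 1)) = 1"
      using R.distL_int_leader[of x] R.modest_int_shield[OF modest] agents by auto
    then show ?thesis using D.responder_quiet clean agents True by simp
  next
    case False
    have "A (x - int (j + 1)) = A i" using A_init resp by (simp add: algebra_simps)
    then have "dist_step1 (A i) + 1 \<le> distL_int A x - j"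
      using R.modest_intD(2)[OF modest, of "j + 1"] False j unfolding dist_step1_def by auto
    moreover have "leader (A (i + 1)) \<noteq> 1"
      using R.distL_int_minimal[of j x] agents j False by simp
    ultimately show ?thesis using D.responder_quiet(1,2) clean agents False by auto
  qed
qed

text \<open>The segment of a modest agent stays clean whichever of its agents interact: the leader
  closing it is shielded and silent, so it cannot be killed.\<close>
lemma modest_segment_A':
  assumes "\<not> is_init x" and "modest_int A x" and "j \<le> distL_int A x"
  shows "signal (A' (x - int j)) = 0 \<and> dst (A' (x - int j)) \<le> distL_int A x - j \<and>
    (j = distL_int A x \<longrightarrow> shield (A' (x - int j)) = 1)"
proof -
  consider "is_init (x - int j)" | "is_init (x - int j - 1)"
    | "\<not> is_init (x - int j)" "\<not> is_init (x - int j - 1)" by blast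
  then show ?thesis
  proof cases
    case 3 then show ?thesis
      using assms A'_other R.modest_intD R.modest_int_shield by auto
  qed (use assms modest_segment_A'_at_init modest_segment_A'_at_resp in blast)+
qed

lemma distL_int_A'_modest:
  assumes modest: "modest_int A x"
  shows "distL_int A' x = distL_int A x"
proof (cases D.kills)
  case kills: True
  have "\<not> is_init (x - int (distL_int A x) - 1)"
  proof
    assume "is_init (x - int (distL_int A x) - 1)"
    then have "A (x - int (distL_int A x)) = A (i + 1)" using A_resp by simp
    then show False
      using kills R.modest_int_shield[OF modest] R.modest_intD(1)[OF modest, of "distL_int A x"]
      unfolding D.kills_def shield_step5_def by simp
  qed
  then show ?thesis by (rule distL_int_A'_spared)
qed (rule distL_int_A'_no_kill)

lemma modest_A'_of_modest: "\<not> is_init x \<Longrightarrow> modest_int A x \<Longrightarrow> modest_int A' x"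
  unfolding R'.modest_int_iff distL_int_A'_modest using modest_segment_A' by blast

lemma modest_A': "bullet (A' x) = 2 \<Longrightarrow> modest_int A' x"
proof -
  assume bullet: "bullet (A' x) = 2"
  consider "is_init x" | "is_init (x - 1)" | "\<not> is_init x" "\<not> is_init (x - 1)" by blast
  then show ?thesis
  proof cases
    case 1 then show ?thesis using bullet A'_init D.initiator_fields(2) by simp
  next
    case resp: 2
    then have not_init: "\<not> is_init x" using not_init_and_resp by blast
    consider "bullet (A x) = 2"
      | "leader (A (i + 1)) \<noteq> 1" "bullet (A (i + 1)) = 0" "bullet_step4 (A i) = 2"
      using bullet A'_resp[OF resp] A_resp[OF resp] D.responder_fields(5) by (auto split: if_splits)
    then show ?thesis
    proof cases
      case 1 then show ?thesis using modest_A'_of_modest[OF not_init] modest_A by blast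
    next
      case 2 then show ?thesis
        using modest_A'_resp_bullet_from_leader modest_A'_resp_bullet_from_follower resp by blast
    qed
  next
    case 3 then show ?thesis using bullet A'_other modest_A'_of_modest modest_A by auto
  qed
qed

lemma NI_int_A': "NI_int N A'"
  unfolding NI_int_def using has_leader_A' secure_A' modest_A' by blast

end

section \<open>Closure under reachability\<close>

lemma valid_config_interact:
  assumes "valid_config N n C" and "i < n"
  shows "valid_config N n (interact N n C i)"
proof -
  have "(i + 1) mod n < n" using assms(2) by simp
  then show ?thesis
    using assms interaction.valid_state_delta[of N "C i" "C ((i + 1) mod n)"]
    unfolding valid_config_def interact_def Let_def by (auto simp: split_beta)
qed

lemma at_interact:
  assumes "2 \<le> n" and "i < n"
  shows "at (interact N n C i) n k =
    (if k mod int n = int i mod int n then fst (delta N (at C n (int i)) (at C n (int i + 1)))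
     else if (k - 1) mod int n = int i mod int n then snd (delta N (at C n (int i)) (at C n (int i + 1)))
     else at C n k)"
proof -
  define j where "j = (i + 1) mod n"
  define t where "t = nat (k mod int n)"
  have j: "j < n" "i \<noteq> j" and t: "int t = k mod int n" "t < n"
    using assms unfolding j_def t_def by (auto simp: mod_Suc nat_less_iff)
  have at_i: "at C n (int i) = C i" and at_j: "at C n (int i + 1) = C j"
    using assms(2) unfolding at_def j_def by (simp_all add: nat_mod_as_int add.commute)
  have "k mod int n = int i mod int n \<longleftrightarrow> t = i" using t assms(2) by auto
  moreover have "(k - 1) mod int n = int i mod int n \<longleftrightarrow> t = j"
  proof -
    have "(k - 1) mod int n = int i mod int n \<longleftrightarrow> k mod int n = (int i + 1) mod int n"
      by (metis add_diff_cancel_right' diff_add_cancel mod_add_left_eq mod_diff_left_eq)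
    also have "(int i + 1) mod int n = int j" unfolding j_def by (simp add: zmod_int add.commute)
    finally show ?thesis using t by auto
  qed
  moreover have "at (interact N n C i) n k = interact N n C i t" "at C n k = C t"
    unfolding at_def t_def by simp_all
  ultimately show ?thesis
    using j unfolding interact_def Let_def j_def[symmetric] at_i at_j by (auto simp: split_beta)
qed

lemma C_NI_interact:
  assumes "2 \<le> n" and "n \<le> N" and "valid_config N n C" and "C \<in> C_NI N n" and "i < n"
  shows "interact N n C i \<in> C_NI N n"
proof -
  have n: "0 < n" using assms(1) by simp
  have "valid_state N (at C n k)" for k
    using assms(3) n unfolding at_def valid_config_def by (simp add: nat_less_iff)
  then interpret interaction_step N n "at C n" "at (interact N n C i) n" "int i"
    using assms periodic_at[OF n] C_NI_iff_NI_int[OF n] at_interact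
    by unfold_locales auto
  show ?thesis using NI_int_A' C_NI_iff_NI_int[OF n] by simp
qed

theorem lemma6:
  fixes N n :: nat and C C' :: config
  assumes "2 \<le> n" and "n \<le> N"
    and "valid_config N n C"
    and "C \<in> C_NI N n"
    and "reachable N n C C'"
  shows "C' \<in> C_NI N n"
proof -
  have "(step N n)\<^sup>*\<^sup>* C C'" using assms(5) unfolding reachable_def .
  then have "valid_config N n C' \<and> C' \<in> C_NI N n"
  proof (induction rule: rtranclp_induct)
    case base then show ?case using assms(3,4) by simp
  next
    case (step C'' C''')
    then show ?case
      using valid_config_interact C_NI_interact assms(1,2) unfolding step_def by blast
  qed
  then show ?thesis by simp
qed

end
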